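(* Let $X$ be an extensible marked Dynkin diagram and $\lambda,\mu,\nu\in\mathcal H_2^+$. Suppose $c_{\lambda\mu}^{\,\nu}(n)>0$ for infinitely many values of $n$ greater than the lengths of each of $\lambda,\mu,\nu$. Then $|\lambda|_X+|\mu|_X=|\nu|_X$.
   Context: A marked Dynkin diagram $X$ has nodes $1,\dots,d$ with node $d$ distinguished and symmetrizable generalized Cartan matrix $C(X)$. For $n\ge d$, $X_n$ is obtained by attaching a simply-laced chain of new nodes $d+1,\dots,n$ to node $d$ (so $C(X_n)$ has $C(X)$ as upper-left block, $2$ on the remaining diagonal, $-1$ in positions $(i,i+1),(i+1,i)$ for $d\le i<n$, $0$ elsewhere); $X_{d-1}$ is $X$ with node $d$ deleted. $\det(Y)$ is the determinant of the generalized Cartan matrix of $Y$. The sequence $\det(X_n)$, $n\ge d$, is arithmetic with common difference $\Delta$; $X$ is extensible if $\Delta\ne0$, $\det(X)\ne0$ and $\gcd(\Delta,\det X)=1$. $\mathfrak g(X_n)$ is the Kac–Moody algebra with Cartan matrix $C(X_n)$, fundamental weights $\omega_i^{(n)}$, $\overline{\omega}_i^{(n)}=\omega_{n-i+1}^{(n)}$. $\mathcal H_1$ is the set of finitely supported integer sequences, $\mathcal H_1^+$ those with nonnegative entries, $\ell(x)=\max\{i:x_i\ne0\}$; $\mathcal H_2=\mathcal H_1\times\mathcal H_1$, $\mathcal H_2^+=\mathcal H_1^+\times\mathcal H_1^+$. For $\lambda=(x,y)$, its length is $\ell(\lambda,X)=\ell(y)+\max(d,\ell(x))$ and for $n\ge\ell(\lambda,X)$,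 $\lambda^{(n)}=\sum_ix_i\omega_i^{(n)}+\sum_iy_i\overline{\omega}_i^{(n)}$. $c_{\lambda\mu}^{\,\nu}(n)$ is the multiplicity of $L(\nu^{(n)})$ in $L(\lambda^{(n)})\otimes L(\mu^{(n)})$ (irreducible integrable highest weight $\mathfrak g(X_n)$-modules). Integers $a_i$: for $1\le i\le d$, $a_i=\det(X)(C(X)^{-1})_{d\,i}$; for $i>d$, $a_i=\det(X_{i-1})$. The number of boxes of $\lambda=(x,y)\in\mathcal H_2$ is $|\lambda|_X=\sum_i a_ix_i-\Delta\sum_i i\,y_i$. *)

theory Defs
  imports "Jordan_Normal_Form.DL_Rank" "Jordan_Normal_Form.Gauss_Jordan_Elimination"
begin

text \<open>A marked Dynkin diagram X with nodes 1..d (node d distinguished) is given by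
  its generalized Cartan matrix A, with entries A i j for i, j in {1..d}.\<close>

definition gcm :: "(nat \<Rightarrow> nat \<Rightarrow> int) \<Rightarrow> nat \<Rightarrow> bool" where
  "gcm A d \<longleftrightarrow> (\<forall>i\<in>{1..d}. A i i = 2) \<and>
     (\<forall>i\<in>{1..d}. \<forall>j\<in>{1..d}. i \<noteq> j \<longrightarrow> A i j \<le> 0) \<and>
     (\<forall>i\<in>{1..d}. \<forall>j\<in>{1..d}. A i j = 0 \<longleftrightarrow> A j i = 0)"

definition symmetrizable :: "(nat \<Rightarrow> nat \<Rightarrow> int) \<Rightarrow> nat \<Rightarrow> bool" where
  "symmetrizable A d \<longleftrightarrow> (\<exists>D :: nat \<Rightarrow> rat. (\<forall>i\<in>{1..d}. D i > 0) \<and>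
     (\<forall>i\<in>{1..d}. \<forall>j\<in>{1..d}. D i * of_int (A i j) = D j * of_int (A j i)))"

definition marked_dynkin :: "(nat \<Rightarrow> nat \<Rightarrow> int) \<Rightarrow> nat \<Rightarrow> bool" where
  "marked_dynkin A d \<longleftrightarrow> d \<ge> 1 \<and> gcm A d \<and> symmetrizable A d"

text \<open>Entries (1-indexed) of the Cartan matrix C(X_n), n \<ge> d.\<close>
definition cartanX :: "(nat \<Rightarrow> nat \<Rightarrow> int) \<Rightarrow> nat \<Rightarrow> nat \<Rightarrow> nat \<Rightarrow> int" where
  "cartanX A d i j =
     (if i \<le> d \<and> j \<le> d then A i j
      else if i = j then 2
      else if (i + 1 = j \<or> j + 1 = i) then -1
      else 0)"

text \<open>C(X_n) as an n x n integer matrix (0-indexed in JNF).\<close>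
definition cmat :: "(nat \<Rightarrow> nat \<Rightarrow> int) \<Rightarrow> nat \<Rightarrow> nat \<Rightarrow> int mat" where
  "cmat A d n = mat n n (\<lambda>(i, j). cartanX A d (i + 1) (j + 1))"

definition detX :: "(nat \<Rightarrow> nat \<Rightarrow> int) \<Rightarrow> nat \<Rightarrow> nat \<Rightarrow> int" where
  "detX A d n = det (cmat A d n)"

definition Delta :: "(nat \<Rightarrow> nat \<Rightarrow> int) \<Rightarrow> nat \<Rightarrow> int" where
  "Delta A d = detX A d (d + 1) - detX A d d"

definition extensible :: "(nat \<Rightarrow> nat \<Rightarrow> int) \<Rightarrow> nat \<Rightarrow> bool" where
  "extensible A d \<longleftrightarrow> marked_dynkin A d \<and> Delta A d \<noteq> 0 \<and> detX A d d \<noteq> 0 \<and>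
     gcd (Delta A d) (detX A d d) = 1"

text \<open>Sequences x_1, x_2, ... are functions nat => int with x 0 = 0 (unused index).\<close>
definition H1 :: "(nat \<Rightarrow> int) set" where
  "H1 = {x. finite {i. x i \<noteq> 0} \<and> x 0 = 0}"

definition H1pos :: "(nat \<Rightarrow> int) set" where
  "H1pos = {x. x \<in> H1 \<and> (\<forall>i. x i \<ge> 0)}"

definition H2pos :: "((nat \<Rightarrow> int) \<times> (nat \<Rightarrow> int)) set" where
  "H2pos = H1pos \<times> H1pos"

definition len1 :: "(nat \<Rightarrow> int) \<Rightarrow> nat" where
  "len1 x = Max (insert 0 {i. x i \<noteq> 0})"

definition lenX :: "nat \<Rightarrow> (nat \<Rightarrow> int) \<times> (nat \<Rightarrow> int) \<Rightarrow> nat" where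
  "lenX d lam = len1 (snd lam) + max d (len1 (fst lam))"

text \<open>Dynkin labels of lambda^(n) = sum x_i omega_i + sum y_i omega_{n-i+1}:
  the coefficient of omega_i (i in 1..n) is x_i + y_{n+1-i}.\<close>
definition labels :: "nat \<Rightarrow> (nat \<Rightarrow> int) \<times> (nat \<Rightarrow> int) \<Rightarrow> nat \<Rightarrow> int" where
  "labels n lam i = fst lam i + snd lam (n + 1 - i)"

text \<open>Cm: Cartan entries a_ij = alpha_j(h_i) (1-indexed), n: rank, L: Dynkin labels
  L i = lambda(h_i). A word [j1,...,jm] stands for f_j1 ... f_jm v_lambda in the
  Verma module over the algebra with generators e_i, f_i, h.  eop i w expands
  e_i (w v_lambda) as an integer combination of words, using e_i v = 0 and
  [e_i, f_j] = delta_ij h_i.\<close>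
fun eop :: "(nat \<Rightarrow> nat \<Rightarrow> int) \<Rightarrow> nat \<Rightarrow> (nat \<Rightarrow> int) \<Rightarrow> nat \<Rightarrow> nat list
              \<Rightarrow> (int \<times> nat list) list" where
  "eop Cm n L i [] = []"
| "eop Cm n L i (j # u) =
     map (\<lambda>(c, w). (c, j # w)) (eop Cm n L i u) @
     (if i = j then [(L i - (\<Sum>l = 1..n. Cm i l * int (count_list u l)), u)] else [])"

text \<open>Contravariant (Shapovalov) form: B(v,v) = 1, B(f_i u v, u' v) = B(u v, e_i u' v).\<close>
fun shap :: "(nat \<Rightarrow> nat \<Rightarrow> int) \<Rightarrow> nat \<Rightarrow> (nat \<Rightarrow> int) \<Rightarrow> nat list \<Rightarrow> nat list \<Rightarrow> int" where
  "shap Cm n L [] u' = (if u' = [] then 1 else 0)"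
| "shap Cm n L (i # u) u' = sum_list (map (\<lambda>(c, w). c * shap Cm n L u w) (eop Cm n L i u'))"

text \<open>Words of weight lambda - sum_i k_i alpha_i.\<close>
definition wordsOf :: "nat \<Rightarrow> (nat \<Rightarrow> nat) \<Rightarrow> nat list set" where
  "wordsOf n k = {w. length w = (\<Sum>i = 1..n. k i) \<and> set w \<subseteq> {1..n} \<and>
                     (\<forall>i\<in>{1..n}. count_list w i = k i)}"

text \<open>Dimension of the weight space of weight lambda - sum k_i alpha_i in L(lambda):
  the rank of the Gram matrix of the Shapovalov form on that weight space of the
  Verma module (L(lambda) = Verma module modulo the radical of this form).\<close>
definition wmult :: "(nat \<Rightarrow> nat \<Rightarrow> int) \<Rightarrow> nat \<Rightarrow> (nat \<Rightarrow> int) \<Rightarrow> (nat \<Rightarrow> nat) \<Rightarrow> nat" where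
  "wmult Cm n L k =
     (let ws = (SOME ws. distinct ws \<and> set ws = wordsOf n k);
          m = length ws
      in vec_space.rank m
           (mat m m (\<lambda>(a, b). rat_of_int (shap Cm n L (ws ! a) (ws ! b)))))"

text \<open>Positive root lattice Q_+ (coefficient vectors on nodes 1..n).\<close>
definition Qplus :: "nat \<Rightarrow> (nat \<Rightarrow> nat) set" where
  "Qplus n = {k. \<forall>i. i \<notin> {1..n} \<longrightarrow> k i = 0}"

definition below :: "(nat \<Rightarrow> nat) \<Rightarrow> (nat \<Rightarrow> nat) set" where
  "below g = {k. \<forall>i. k i \<le> g i}"

text \<open>Weight multiplicity of L(lambda) (x) L(mu) at weight lambda + mu - gamma.\<close>
definition tmult :: "(nat \<Rightarrow> nat \<Rightarrow> int) \<Rightarrow> nat \<Rightarrow> (nat \<Rightarrow> int) \<Rightarrow> (nat \<Rightarrow> int) \<Rightarrow> (nat \<Rightarrow> nat) \<Rightarrow> nat" where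
  "tmult Cm n L M g = (\<Sum>k\<in>below g. wmult Cm n L k * wmult Cm n M (\<lambda>i. g i - k i))"

text \<open>Multiplicities c_gamma of L(lambda + mu - gamma) in L(lambda) (x) L(mu): the unique
  family satisfying the character identity ch(L(lambda) (x) L(mu)) =
  sum_gamma c_gamma ch L(lambda + mu - gamma) (complete reducibility of the tensor
  product of integrable highest weight modules of a symmetrizable Kac-Moody algebra).\<close>
definition tcoeff :: "(nat \<Rightarrow> nat \<Rightarrow> int) \<Rightarrow> nat \<Rightarrow> (nat \<Rightarrow> int) \<Rightarrow> (nat \<Rightarrow> int) \<Rightarrow> (nat \<Rightarrow> nat) \<Rightarrow> int" where
  "tcoeff Cm n L M =
     (THE c. (\<forall>g. g \<notin> Qplus n \<longrightarrow> c g = 0) \<and>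
        (\<forall>g\<in>Qplus n. int (tmult Cm n L M g) =
           (\<Sum>g'\<in>below g. c g' * int (wmult Cm n (\<lambda>i. L i + M i - (\<Sum>l = 1..n. Cm i l * int (g' l)))
                                             (\<lambda>i. g i - g' i)))))"

text \<open>c_{lambda mu}^nu(n): multiplicity of L(nu^(n)) in L(lambda^(n)) (x) L(mu^(n)) for
  g(X_n); nu^(n) = lambda^(n) + mu^(n) - gamma with gamma in Q_+.\<close>
definition cmult :: "(nat \<Rightarrow> nat \<Rightarrow> int) \<Rightarrow> nat \<Rightarrow> nat \<Rightarrow>
     (nat \<Rightarrow> int) \<times> (nat \<Rightarrow> int) \<Rightarrow> (nat \<Rightarrow> int) \<times> (nat \<Rightarrow> int) \<Rightarrow> (nat \<Rightarrow> int) \<times> (nat \<Rightarrow> int) \<Rightarrow> int" where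
  "cmult A d n lam mu nu =
     (let Cm = cartanX A d; L = labels n lam; M = labels n mu; N = labels n nu
      in \<Sum>g\<in>{g\<in>Qplus n. \<forall>i\<in>{1..n}. L i + M i - (\<Sum>l = 1..n. Cm i l * int (g l)) = N i}.
           tcoeff Cm n L M g)"

definition acoef :: "(nat \<Rightarrow> nat \<Rightarrow> int) \<Rightarrow> nat \<Rightarrow> nat \<Rightarrow> rat" where
  "acoef A d i =
     (if i \<le> d then rat_of_int (detX A d d) *
        (the (mat_inverse (map_mat rat_of_int (cmat A d d)))) $$ (d - 1, i - 1)
      else rat_of_int (detX A d (i - 1)))"

definition boxes :: "(nat \<Rightarrow> nat \<Rightarrow> int) \<Rightarrow> nat \<Rightarrow> (nat \<Rightarrow> int) \<times> (nat \<Rightarrow> int) \<Rightarrow> rat" where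
  "boxes A d lam =
     (\<Sum>i\<in>{i. fst lam i \<noteq> 0}. acoef A d i * rat_of_int (fst lam i))
     - rat_of_int (Delta A d) * (\<Sum>i\<in>{i. snd lam i \<noteq> 0}. rat_of_nat i * rat_of_int (snd lam i))"

end

theory Submission imports Defs begin

(* The integers a_1, ..., a_n satisfy (a_1, ..., a_n) C(X_n) = det(X_n) e_n: on the first d
   columns this is the adjugate formula for C(X), and on the chain it follows from the
   recurrence det(X_(k+2)) = 2 det(X_(k+1)) - det(X_k), which also gives
   det(X_n) = det X + (n - d) Delta.  Pairing (a_i) with the Dynkin labels of lambda^(n)
   yields |lambda|_X plus det(X_n) times an integer.  If c(n) > 0, then
   lambda^(n) + mu^(n) - nu^(n) = C(X_n) g with g in Q_+, whose pairing with (a_i) is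
   det(X_n) g_n.  So |lambda|_X + |mu|_X - |nu|_X is a multiple of det(X_n) for infinitely
   many n, and |det(X_n)| is unbounded because Delta <> 0. *)

lemma cmat_carrier [simp]: "cmat A d n \<in> carrier_mat n n"
  by (simp add: cmat_def)

lemma cmat_dim [simp]: "dim_row (cmat A d n) = n" "dim_col (cmat A d n) = n"
  by (simp_all add: cmat_def)

lemma cmat_index [simp]:
  "i < n \<Longrightarrow> j < n \<Longrightarrow> cmat A d n $$ (i, j) = cartanX A d (Suc i) (Suc j)"
  by (simp add: cmat_def)

lemma cofactor_cmat_subdiagonal:
  assumes "d \<le> k + 1"
  shows "cofactor (cmat A d (k + 2)) (k + 1) k = detX A d k"
proof -
  define M where "M = mat_delete (cmat A d (k + 2)) (k + 1) k"
  have M_carrier: "M \<in> carrier_mat (k + 1) (k + 1)"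
    unfolding M_def carrier_mat_def by simp
  have M_last_col: "M $$ (i, k) = (if i = k then -1 else 0)" if "i < k + 1" for i
    using that assms by (simp add: M_def mat_delete_def cartanX_def)
  have minor: "mat_delete M k k = cmat A d k"
    by (rule eq_matI) (auto simp: M_def mat_delete_def)
  have "det M = (\<Sum>i<k + 1. M $$ (i, k) * cofactor M i k)"
    by (rule laplace_expansion_column[OF M_carrier]) simp
  also have "\<dots> = - cofactor M k k"
    by (simp add: M_last_col lessThan_Suc)
  also have "\<dots> = - detX A d k"
    by (simp add: cofactor_def minor detX_def)
  finally have "det M = - detX A d k" .
  then show ?thesis
    unfolding cofactor_def M_def[symmetric] by simp
qed

lemma detX_recurrence:
  assumes "d \<le> k + 1"
  shows "detX A d (k + 2) = 2 * detX A d (k + 1) - detX A d k"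
proof -
  let ?C = "cmat A d (k + 2)"
  have minor: "mat_delete ?C (k + 1) (k + 1) = cmat A d (k + 1)"
    by (rule eq_matI) (auto simp: mat_delete_def)
  have last_row: "?C $$ (k + 1, j) = (if j = k + 1 then 2 else if j = k then -1 else 0)"
    if "j < k + 2" for j
    using that assms by (auto simp: cartanX_def)
  have "det ?C = (\<Sum>j<k + 2. ?C $$ (k + 1, j) * cofactor ?C (k + 1) j)"
    by (rule laplace_expansion_row) auto
  also have "\<dots> = (\<Sum>j<k + 2. (if j = k + 1 then 2 else if j = k then -1 else 0)
                        * cofactor ?C (k + 1) j)"
    by (rule sum.cong[OF refl]) (simp only: last_row lessThan_iff)
  also have "\<dots> = 2 * cofactor ?C (k + 1) (k + 1) - cofactor ?C (k + 1) k"
    by (simp add: lessThan_Suc)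
  finally have "detX A d (k + 2) = 2 * cofactor ?C (k + 1) (k + 1) - cofactor ?C (k + 1) k"
    unfolding detX_def .
  moreover have "cofactor ?C (k + 1) (k + 1) = detX A d (k + 1)"
    unfolding cofactor_def minor detX_def by simp
  ultimately show ?thesis
    using cofactor_cmat_subdiagonal[OF assms] by simp
qed

lemma detX_linear:
  assumes "d \<le> m + 1"
  shows "detX A d m = detX A d d + (int m - int d) * Delta A d"
  using assms
proof (induction m rule: less_induct)
  case (less m)
  consider "m = d" | "m + 1 = d" | "m = d + 1" | "d + 2 \<le> m"
    using less.prems by linarith
  then show ?case
  proof cases
    case 2
    then have "d = m + 1"
      by simp
    with detX_recurrence[of d m A] show ?thesis
      by (simp add: Delta_def)
  next
    case 3
    then show ?thesis
      by (simp add: Delta_def)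
  next
    case 4
    define k where "k = m - 2"
    have "m = k + 2" "d \<le> k"
      using 4 by (simp_all add: k_def)
    then show ?thesis
      using detX_recurrence[of d k A] less.IH[of k] less.IH[of "k + 1"]
      by (simp add: algebra_simps)
  qed simp
qed

lemma mat_inverse_adj_mat:
  fixes R :: "'a :: field mat"
  assumes R: "R \<in> carrier_mat n n" and det: "det R \<noteq> 0"
  obtains B where "mat_inverse R = Some B" "B * R = 1\<^sub>m n" "B \<in> carrier_mat n n"
    "adj_mat R = det R \<cdot>\<^sub>m B"
proof -
  have "mat_inverse R \<noteq> None"
    using mat_inverse(1)[OF R, of "()"] det_non_zero_imp_unit[OF R det, of "()"] by auto
  then obtain B where inv: "mat_inverse R = Some B"
    by auto
  from mat_inverse(2)[OF R inv] have RB: "R * B = 1\<^sub>m n" and BR: "B * R = 1\<^sub>m n"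
    and B: "B \<in> carrier_mat n n"
    by auto
  have "adj_mat R = adj_mat R * (R * B)"
    using RB adj_mat(1)[OF R] by simp
  also have "\<dots> = (adj_mat R * R) * B"
    using adj_mat(1)[OF R] R B by simp
  also have "\<dots> = det R \<cdot>\<^sub>m B"
    using adj_mat(3)[OF R] B by (simp add: mult_smult_assoc_mat[of _ n n])
  finally show ?thesis
    using that inv BR B by blast
qed

lemma acoef_cartan_row:
  assumes det: "detX A d d \<noteq> 0" and j: "j \<in> {1..d}"
  shows "(\<Sum>i = 1..d. acoef A d i * of_int (A i j)) = (if j = d then of_int (detX A d d) else 0)"
proof -
  define R where "R = map_mat rat_of_int (cmat A d d)"
  have R: "R \<in> carrier_mat d d"
    by (simp add: R_def)
  have "det R = of_int (detX A d d)"
    by (simp add: R_def detX_def)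
  with det obtain B where inv: "mat_inverse R = Some B" and BR: "B * R = 1\<^sub>m d"
    and B: "B \<in> carrier_mat d d"
    using mat_inverse_adj_mat[OF R] by force
  obtain j' where j': "j = Suc j'" "j' < d"
    using j by (cases j) auto
  have acoef_B: "acoef A d (Suc l) = of_int (detX A d d) * B $$ (d - 1, l)" if "l < d" for l
    using that by (simp add: acoef_def R_def[symmetric] inv)
  have R_entry: "R $$ (l, j') = of_int (A (Suc l) j)" if "l < d" for l
    using that j' by (simp add: R_def cartanX_def)
  have "(\<Sum>i = 1..d. acoef A d i * of_int (A i j)) = (\<Sum>l<d. acoef A d (Suc l) * of_int (A (Suc l) j))"
    by (rule sum.reindex_bij_witness[of _ Suc "\<lambda>i. i - 1"]) auto
  also have "\<dots> = (\<Sum>l<d. of_int (detX A d d) * (B $$ (d - 1, l) * R $$ (l, j')))"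
    by (rule sum.cong[OF refl]) (simp add: acoef_B R_entry)
  also have "\<dots> = of_int (detX A d d) * (B * R) $$ (d - 1, j')"
    using j' R B by (simp add: sum_distrib_left scalar_prod_def atLeast0LessThan)
  also have "\<dots> = (if j = d then of_int (detX A d d) else 0)"
    using BR j' by auto
  finally show ?thesis .
qed

lemma acoef_eq_detX:
  assumes d: "1 \<le> d" and det: "detX A d d \<noteq> 0" and i: "d \<le> i"
  shows "acoef A d i = of_int (detX A d (i - 1))"
proof (cases "i = d")
  case True
  define R where "R = map_mat rat_of_int (cmat A d d)"
  have R: "R \<in> carrier_mat d d"
    by (simp add: R_def)
  have "det R = of_int (detX A d d)"
    by (simp add: R_def detX_def)
  with det obtain B where inv: "mat_inverse R = Some B" and B: "B \<in> carrier_mat d d"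
    and adj: "adj_mat R = of_int (detX A d d) \<cdot>\<^sub>m B"
    using mat_inverse_adj_mat[OF R] by force
  have "acoef A d d = adj_mat R $$ (d - 1, d - 1)"
    using d B by (simp add: acoef_def R_def[symmetric] inv adj)
  also have "\<dots> = det (mat_delete R (d - 1) (d - 1))"
    using R d by (simp add: adj_mat_def cofactor_def)
  also have "mat_delete R (d - 1) (d - 1) = map_mat rat_of_int (cmat A d (d - 1))"
    unfolding R_def by (rule eq_matI) (auto simp: mat_delete_def)
  finally show ?thesis
    using True by (simp add: detX_def)
next
  case False
  with i show ?thesis
    by (simp add: acoef_def)
qed

lemma acoef_cartanX_sum:
  assumes d: "1 \<le> d" and det: "detX A d d \<noteq> 0" and n: "d \<le> n" and j: "j \<in> {1..n}"
  shows "(\<Sum>i = 1..n. acoef A d i * of_int (cartanX A d i j))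
    = (if j = n then of_int (detX A d n) else 0)"
  using n j
proof (induction n arbitrary: j rule: nat_induct_at_least)
  case base
  have "(\<Sum>i = 1..d. acoef A d i * of_int (cartanX A d i j)) = (\<Sum>i = 1..d. acoef A d i * of_int (A i j))"
    using base by (intro sum.cong) (auto simp: cartanX_def)
  with acoef_cartan_row[OF det base] show ?case
    by simp
next
  case (Suc n)
  have acoef_Suc: "acoef A d (Suc n) = of_int (detX A d n)"
    using acoef_eq_detX[OF d det] Suc.hyps by simp
  show ?case
  proof (cases "j \<le> n")
    case True
    have "cartanX A d (Suc n) j = (if j = n then -1 else 0)"
      using True Suc.hyps d by (auto simp: cartanX_def)
    with Suc.IH[of j] True Suc.prems acoef_Suc show ?thesis
      by simp
  next
    case False
    then have j: "j = Suc n"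
      using Suc.prems by simp
    have "(\<Sum>i = 1..n. acoef A d i * of_int (cartanX A d i j)) = (\<Sum>i = 1..n. if i = n then - acoef A d i else 0)"
      using j Suc.hyps d by (intro sum.cong) (auto simp: cartanX_def)
    also have "\<dots> = - of_int (detX A d (n - 1))"
      using acoef_eq_detX[OF d det Suc.hyps] Suc.hyps d by simp
    finally have "(\<Sum>i = 1..n. acoef A d i * of_int (cartanX A d i j)) = - of_int (detX A d (n - 1))" .
    moreover have "detX A d (n - 1 + 2) = 2 * detX A d (n - 1 + 1) - detX A d (n - 1)"
      using Suc.hyps by (intro detX_recurrence) simp
    moreover have "cartanX A d (Suc n) j = 2"
      using j Suc.hyps by (simp add: cartanX_def)
    ultimately show ?thesis
      using j acoef_Suc Suc.hyps d by (simp add: Suc_diff_le)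
  qed
qed

lemma acoef_pairing_cartan_image:
  assumes d: "1 \<le> d" and det: "detX A d d \<noteq> 0" and n: "d \<le> n"
    and v: "\<forall>i \<in> {1..n}. v i = (\<Sum>l = 1..n. cartanX A d i l * int (g l))"
  shows "(\<Sum>i = 1..n. acoef A d i * of_int (v i)) = of_int (detX A d n) * of_nat (g n)"
proof -
  have "(\<Sum>i = 1..n. acoef A d i * of_int (v i))
      = (\<Sum>i = 1..n. \<Sum>l = 1..n. acoef A d i * of_int (cartanX A d i l) * of_nat (g l))"
    using v by (intro sum.cong) (simp_all add: sum_distrib_left mult.assoc)
  also have "\<dots> = (\<Sum>l = 1..n. (\<Sum>i = 1..n. acoef A d i * of_int (cartanX A d i l)) * of_nat (g l))"
    by (subst sum.swap) (simp add: sum_distrib_right)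
  also have "\<dots> = (\<Sum>l = 1..n. if l = n then of_int (detX A d n) * of_nat (g l) else 0)"
    using acoef_cartanX_sum[OF d det n] by (intro sum.cong) simp_all
  also have "\<dots> = of_int (detX A d n) * of_nat (g n)"
    using d n by simp
  finally show ?thesis .
qed

lemma acoef_reversed_chain:
  assumes d: "1 \<le> d" and det: "detX A d d \<noteq> 0" and k: "k + d \<le> n + 1"
  shows "acoef A d (n + 1 - k) = of_int (detX A d n) - of_nat k * of_int (Delta A d)"
proof -
  have "acoef A d (n + 1 - k) = of_int (detX A d (n - k))"
    using acoef_eq_detX[OF d det, of "n + 1 - k"] k d by simp
  moreover have "detX A d (n - k) = detX A d n - int k * Delta A d"
  proof -
    have "d \<le> n - k + 1" "k \<le> n"
      using k d by linarith+
    then have "detX A d (n - k) = detX A d d + (int n - int k - int d) * Delta A d"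
      using detX_linear[of d "n - k" A] by simp
    moreover have "detX A d n = detX A d d + (int n - int d) * Delta A d"
      using detX_linear[of d n A] k by simp
    ultimately show ?thesis
      by (simp add: algebra_simps)
  qed
  ultimately show ?thesis
    by simp
qed

lemma H1_support_subset_len1:
  assumes "x \<in> H1"
  shows "{i. x i \<noteq> 0} \<subseteq> {1..len1 x}"
proof
  fix i
  assume i: "i \<in> {i. x i \<noteq> 0}"
  have fin: "finite (insert 0 {i. x i \<noteq> 0})" and "x 0 = 0"
    using assms by (simp_all add: H1_def)
  then have "i \<noteq> 0"
    using i by (cases i) auto
  moreover have "i \<le> len1 x"
    unfolding len1_def using i fin by (intro Max_ge) auto
  ultimately show "i \<in> {1..len1 x}"
    by simp
qed

lemma boxes_eq_sum_upto:
  assumes x: "fst lam \<in> H1" and y: "snd lam \<in> H1" and n: "lenX d lam \<le> n"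
  shows "boxes A d lam = (\<Sum>i = 1..n. acoef A d i * of_int (fst lam i))
    - of_int (Delta A d) * (\<Sum>i = 1..n. of_nat i * of_int (snd lam i))"
proof -
  have "{1..len1 (fst lam)} \<subseteq> {1..n}" "{1..len1 (snd lam)} \<subseteq> {1..n}"
    using n by (auto simp: lenX_def)
  then have "{i. fst lam i \<noteq> 0} \<subseteq> {1..n}" "{i. snd lam i \<noteq> 0} \<subseteq> {1..n}"
    using H1_support_subset_len1[OF x] H1_support_subset_len1[OF y] by blast+
  then have "(\<Sum>i | fst lam i \<noteq> 0. acoef A d i * of_int (fst lam i))
        = (\<Sum>i = 1..n. acoef A d i * of_int (fst lam i))"
    and "(\<Sum>i | snd lam i \<noteq> 0. of_nat i * of_int (snd lam i))
        = (\<Sum>i = 1..n. of_nat i * (of_int (snd lam i) :: rat))"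
    by (auto intro: sum.mono_neutral_left)
  then show ?thesis
    unfolding boxes_def by simp
qed

lemma acoef_labels_sum:
  assumes d: "1 \<le> d" and det: "detX A d d \<noteq> 0"
    and x: "fst lam \<in> H1" and y: "snd lam \<in> H1" and n: "lenX d lam < n"
  shows "(\<Sum>i = 1..n. acoef A d i * of_int (labels n lam i))
    = boxes A d lam + of_int (detX A d n) * of_int (\<Sum>k = 1..n. snd lam k)"
proof -
  have acoef_rev: "acoef A d (n + 1 - k) = of_int (detX A d n) - of_nat k * of_int (Delta A d)"
    if "snd lam k \<noteq> 0" for k
  proof -
    have "k \<in> {1..len1 (snd lam)}"
      using H1_support_subset_len1[OF y] that by blast
    with n show ?thesis
      by (intro acoef_reversed_chain[OF d det]) (auto simp: lenX_def)
  qed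
  have "(\<Sum>i = 1..n. acoef A d i * of_int (snd lam (n + 1 - i)))
      = (\<Sum>k = 1..n. acoef A d (n + 1 - k) * of_int (snd lam k))"
    by (rule sum.reindex_bij_witness[of _ "\<lambda>k. n + 1 - k" "\<lambda>i. n + 1 - i"]) auto
  also have "\<dots> = (\<Sum>k = 1..n. of_int (detX A d n) * of_int (snd lam k)
                                  - of_int (Delta A d) * (of_nat k * of_int (snd lam k)))"
  proof (intro sum.cong refl)
    fix k
    show "acoef A d (n + 1 - k) * of_int (snd lam k)
        = of_int (detX A d n) * of_int (snd lam k) - of_int (Delta A d) * (of_nat k * of_int (snd lam k))"
    proof (cases "snd lam k = 0")
      case False
      then show ?thesis
        unfolding acoef_rev[OF False] by (simp add: algebra_simps)
    qed simp
  qed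
  also have "\<dots> = of_int (detX A d n) * of_int (\<Sum>k = 1..n. snd lam k)
                  - of_int (Delta A d) * (\<Sum>k = 1..n. of_nat k * of_int (snd lam k))"
    by (simp add: sum_subtractf sum_distrib_left)
  finally show ?thesis
    using boxes_eq_sum_upto[OF x y, of d n A] n
    by (simp add: labels_def distrib_left sum.distrib)
qed

lemma cmult_nonzero_imp_root_lattice_diff:
  assumes "cmult A d n lam mu nu \<noteq> 0"
  obtains g where "\<forall>i \<in> {1..n}. labels n lam i + labels n mu i - labels n nu i
                      = (\<Sum>l = 1..n. cartanX A d i l * int (g l))"
proof -
  have "{g \<in> Qplus n. \<forall>i \<in> {1..n}. labels n lam i + labels n mu i
           - (\<Sum>l = 1..n. cartanX A d i l * int (g l)) = labels n nu i} \<noteq> {}"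
    using assms unfolding cmult_def Let_def by (metis sum.empty)
  then obtain g where "\<forall>i \<in> {1..n}. labels n lam i + labels n mu i
           - (\<Sum>l = 1..n. cartanX A d i l * int (g l)) = labels n nu i"
    by blast
  then show thesis
    by (intro that[of g]) auto
qed

lemma boxes_diff_multiple_of_detX:
  assumes d: "1 \<le> d" and det: "detX A d d \<noteq> 0"
    and H: "lam \<in> H2pos" "mu \<in> H2pos" "nu \<in> H2pos"
    and n: "lenX d lam < n" "lenX d mu < n" "lenX d nu < n"
    and c: "cmult A d n lam mu nu \<noteq> 0"
  shows "\<exists>m :: int. boxes A d lam + boxes A d mu - boxes A d nu = of_int (detX A d n) * of_int m"
proof -
  have components: "fst \<kappa> \<in> H1" "snd \<kappa> \<in> H1" if "\<kappa> \<in> H2pos" for \<kappa>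
    using that by (auto simp: H2pos_def H1pos_def)
  have nd: "d \<le> n"
    using n by (simp add: lenX_def)
  obtain g where g: "\<forall>i \<in> {1..n}. labels n lam i + labels n mu i - labels n nu i
                      = (\<Sum>l = 1..n. cartanX A d i l * int (g l))"
    using cmult_nonzero_imp_root_lattice_diff[OF c] by blast
  let ?pair = "\<lambda>\<kappa>. \<Sum>i = 1..n. acoef A d i * of_int (labels n \<kappa> i)"
  have "?pair lam + ?pair mu - ?pair nu
      = (\<Sum>i = 1..n. acoef A d i * of_int (labels n lam i + labels n mu i - labels n nu i))"
    by (simp add: sum.distrib sum_subtractf algebra_simps)
  also have "\<dots> = of_int (detX A d n) * of_nat (g n)"
    by (rule acoef_pairing_cartan_image[OF d det nd g])
  finally show ?thesis
    using acoef_labels_sum[OF d det components[OF H(1)] n(1)]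
      acoef_labels_sum[OF d det components[OF H(2)] n(2)]
      acoef_labels_sum[OF d det components[OF H(3)] n(3)]
    by (intro exI[of _ "int (g n) - (\<Sum>k = 1..n. snd lam k + snd mu k - snd nu k)"])
      (simp add: sum.distrib sum_subtractf algebra_simps)
qed

lemma abs_detX_lower_bound:
  assumes "Delta A d \<noteq> 0" and "d \<le> n"
  shows "int n - int d - \<bar>detX A d d\<bar> \<le> \<bar>detX A d n\<bar>"
proof -
  have "1 \<le> \<bar>Delta A d\<bar>"
    using assms(1) by linarith
  then have "int n - int d \<le> \<bar>(int n - int d) * Delta A d\<bar>"
    using assms(2) by (simp add: abs_mult mult_le_cancel_left1)
  then show ?thesis
    using detX_linear[of d n A] assms(2) by linarith
qed

lemma multiple_of_larger_int_eq_0: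
  fixes q :: "'a :: linordered_idom"
  assumes "q = of_int a * of_int m" and "\<bar>q\<bar> < of_int \<bar>a\<bar>"
  shows "q = 0"
proof (rule ccontr)
  assume "q \<noteq> 0"
  then have "1 \<le> \<bar>m\<bar>"
    using assms(1) by (cases "m = 0") simp_all
  then have "\<bar>a\<bar> \<le> \<bar>a\<bar> * \<bar>m\<bar>"
    by (simp add: mult_le_cancel_left1)
  with assms show False
    by (simp add: abs_mult flip: of_int_abs of_int_mult)
qed

theorem proposition3p13:
  fixes A :: "nat \<Rightarrow> nat \<Rightarrow> int" and d :: nat
    and lam mu nu :: "(nat \<Rightarrow> int) \<times> (nat \<Rightarrow> int)"
  assumes "extensible A d"
    and "lam \<in> H2pos" and "mu \<in> H2pos" and "nu \<in> H2pos"
    and "infinite {n. n > lenX d lam \<and> n > lenX d mu \<and> n > lenX d nu \<and>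
                      cmult A d n lam mu nu > 0}"
  shows "boxes A d lam + boxes A d mu = boxes A d nu"
proof -
  from assms(1) have d: "1 \<le> d" and det: "detX A d d \<noteq> 0" and Delta: "Delta A d \<noteq> 0"
    by (auto simp: extensible_def marked_dynkin_def)
  define q where "q = boxes A d lam + boxes A d mu - boxes A d nu"
  obtain n where n: "d + nat \<bar>detX A d d\<bar> + nat \<lceil>\<bar>q\<bar>\<rceil> < n"
    and S: "lenX d lam < n" "lenX d mu < n" "lenX d nu < n" "cmult A d n lam mu nu > 0"
    using assms(5) unfolding infinite_nat_iff_unbounded by blast
  obtain m where m: "q = of_int (detX A d n) * of_int m"
    using boxes_diff_multiple_of_detX[OF d det assms(2-4) S(1-3)] S(4) unfolding q_def by fastforce
  have "\<lceil>\<bar>q\<bar>\<rceil> < \<bar>detX A d n\<bar>"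
    using abs_detX_lower_bound[OF Delta, of n] n by linarith
  then have "\<bar>q\<bar> < of_int \<bar>detX A d n\<bar>"
    by linarith
  then have "q = 0"
    using multiple_of_larger_int_eq_0[OF m] by blast
  then show ?thesis
    by (simp add: q_def)
qed

end
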